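(* In the Standing Setup with $R=u(X^2-vX+w)$ ($u,v,w\in\mathbb F$), for every $h\in\mathbb Z$: $$(d_{h-1}d_h+u)(d_hd_{h+1}+u)=-u\,d_h\,(e_h^2+ve_h+w).$$
   Context: Standing Setup. $\mathbb F$ is a field of characteristic not $2$ or $3$; $f,g\in\mathbb F$; $A=X^3+fX+g\in\mathbb F[X]$; $R\in\mathbb F[X]$ is a polynomial of degree at most $2$; $D=A^2+4R$; $Y$ satisfies $Y^2=D(X)$, $Z=\tfrac12(Y+A)$ and $\overline Z=\tfrac12(-Y+A)$, so $Z+\overline Z=A$ and $Z\overline Z=-R$. We are given sequences $(u_h),(v_h),(w_h),(d_h),(e_h)$ of elements of $\mathbb F$ indexed by $h\in\mathbb Z$, with all $u_h\neq0$, such that for every $h\in\mathbb Z$ the following two identities hold in $\mathbb F[X]$: (i) $A+d_h(X+e_h)+d_{h+1}(X+e_{h+1})=(X+v_h)(X^2-v_hX+w_h)$; (ii) $-u_hu_{h+1}(X^2-v_hX+w_h)(X^2-v_{h+1}X+w_{h+1})=d_{h+1}^2(X+e_{h+1})^2+d_{h+1}(X+e_{h+1})A-R$. (These say that $Z_h=\bigl(Z+d_h(X+e_h)\bigr)/\bigl(u_h(X^2-v_hX+w_h)\bigr)$ are consecutive complete quotients of a continued fraction expansion with partial quotients $(X+v_h)/u_h$.) *)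

theory Defs
  imports "HOL-Computational_Algebra.Polynomial"
begin

end

theory Submission
  imports Defs
begin

text \<open>
  Write Q_h = X^2 - v_h X + w_h and L = X + e_h. Identity (ii) at h - 1 is the quartic identity
  -u_{h-1} u_h Q_{h-1} Q_h = d_h^2 L^2 + d_h L A - R. Its leading coefficient gives
  d_h = -u_{h-1} u_h, which is nonzero, and evaluating it at the root -e_h of L gives
  d_h^2 Q_{h-1}(-e_h) Q_h(-e_h) = -d_h R(-e_h). The coefficients of X^3 and X^2, together with
  the coefficient of X in (i) at h - 1 and at h, identify d_h Q_h(-e_h) = -(d_{h-1} d_h + r) and
  d_h Q_{h-1}(-e_h) = -(d_h d_{h+1} + r), where r is the X^2-coefficient of R. Hence the
  identity holds for every R of degree at most 2, and the characteristic is irrelevant.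
\<close>

lemma cubic_sum_eq_product_coeff1:
  fixes f g a b c e v w :: "'a :: comm_ring_1"
  assumes "[:g, f, 0, 1:] + smult a [:b, 1:] + smult c [:e, 1:] = [:v, 1:] * [:w, - v, 1:]"
  shows "f + a + c = w - v\<^sup>2"
  using arg_cong[OF assms, of "\<lambda>p. coeff p 1"] by (simp add: power2_eq_square algebra_simps)

lemma quadratic_at_root_eq:
  fixes d d' e f r v1 w1 v2 w2 :: "'a :: comm_ring_1"
  assumes "e = - (v1 + v2)"
    and "d * (w1 + w2 + v1 * v2) = d\<^sup>2 + d * f - r"
    and "f + d' + d = w1 - v1\<^sup>2"
  shows "d * poly [:w2, - v2, 1:] (- e) = - (d' * d + r)"
proof -
  have "d * poly [:w2, - v2, 1:] (- e) = d * (v1\<^sup>2 + v1 * v2 + w2)"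
    unfolding assms(1) by (simp add: power2_eq_square algebra_simps)
  also have "\<dots> = - (d' * d + r)"
  proof -
    have "w1 = f + d' + d + v1\<^sup>2" using assms(3) by (simp add: algebra_simps)
    then show ?thesis
      using assms(2) by (simp add: algebra_simps power2_eq_square eq_neg_iff_add_eq_0)
  qed
  finally show ?thesis .
qed

context
  fixes k d e f g v1 w1 v2 w2 :: "'a :: field" and R :: "'a poly"
  assumes degree_R: "degree R \<le> 2"
    and quartic: "smult k ([:w1, - v1, 1:] * [:w2, - v2, 1:])
                  = smult (d\<^sup>2) ([:e, 1:]\<^sup>2) + smult d [:e, 1:] * [:g, f, 0, 1:] - R"
begin

lemma quartic_lead_coeff: "d = k"
proof -
  have "coeff R 4 = 0" using degree_R by (simp add: coeff_eq_0)
  then show ?thesis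
    using arg_cong[OF quartic, of "\<lambda>p. coeff p 4"]
    by (simp add: power2_eq_square numeral_eq_Suc)
qed

lemma quartic_coeff3: "d * e = k * - (v1 + v2)"
proof -
  have "coeff R 3 = 0" using degree_R by (simp add: coeff_eq_0)
  then show ?thesis
    using arg_cong[OF quartic, of "\<lambda>p. coeff p 3"]
    by (simp add: power2_eq_square numeral_eq_Suc algebra_simps)
qed

lemma quartic_coeff2: "k * (w1 + w2 + v1 * v2) = d\<^sup>2 + d * f - coeff R 2"
  using arg_cong[OF quartic, of "\<lambda>p. coeff p 2"]
  by (simp add: power2_eq_square numeral_eq_Suc algebra_simps)

lemma quartic_at_root:
  "k * poly [:w1, - v1, 1:] (- e) * poly [:w2, - v2, 1:] (- e) = - poly R (- e)"
  using arg_cong[OF quartic, of "\<lambda>p. poly p (- e)"] by simp algebra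

lemma quartic_quotient_identity:
  assumes "k \<noteq> 0"
    and split_prev: "[:g, f, 0, 1:] + smult d' [:e', 1:] + smult d [:e, 1:]
                     = [:v1, 1:] * [:w1, - v1, 1:]"
    and split_succ: "[:g, f, 0, 1:] + smult d [:e, 1:] + smult d'' [:e'', 1:]
                     = [:v2, 1:] * [:w2, - v2, 1:]"
  shows "(d' * d + coeff R 2) * (d * d'' + coeff R 2) = - d * poly R (- e)"
proof -
  have "d = k" by (rule quartic_lead_coeff)
  have e_eq: "e = - (v1 + v2)"
    using quartic_coeff3 \<open>d = k\<close> \<open>k \<noteq> 0\<close> by simp
  have coeff2: "d * (w1 + w2 + v1 * v2) = d\<^sup>2 + d * f - coeff R 2"
    using quartic_coeff2 \<open>d = k\<close> by simp
  have "d * poly [:w2, - v2, 1:] (- e) = - (d' * d + coeff R 2)"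
    using quadratic_at_root_eq[OF e_eq coeff2 cubic_sum_eq_product_coeff1[OF split_prev]] .
  moreover have "d * poly [:w1, - v1, 1:] (- e) = - (d'' * d + coeff R 2)"
  proof (rule quadratic_at_root_eq)
    show "e = - (v2 + v1)" using e_eq by simp
    show "d * (w2 + w1 + v2 * v1) = d\<^sup>2 + d * f - coeff R 2" using coeff2 by (simp add: ac_simps)
    show "f + d'' + d = w2 - v2\<^sup>2"
      using cubic_sum_eq_product_coeff1[OF split_succ] by (simp add: ac_simps)
  qed
  moreover have "d * poly [:w1, - v1, 1:] (- e) * poly [:w2, - v2, 1:] (- e) = - poly R (- e)"
    using quartic_at_root \<open>d = k\<close> by simp
  ultimately show ?thesis by (simp add: mult_ac) algebra
qed

end

theorem mainTheorem6:
  fixes f g u0 v0 w0 :: "'a :: field"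
    and u v w d e :: "int \<Rightarrow> 'a"
    and A R :: "'a poly"
  assumes char2: "(2::'a) \<noteq> 0" and char3: "(3::'a) \<noteq> 0"
    and A_def: "A = [:g, f, 0, 1:]"
    and R_def: "R = smult u0 [:w0, - v0, 1:]"
    and u_nz: "\<And>h. u h \<noteq> 0"
    and i: "\<And>h. A + smult (d h) [:e h, 1:] + smult (d (h+1)) [:e (h+1), 1:]
                 = [:v h, 1:] * [:w h, - v h, 1:]"
    and ii: "\<And>h. smult (- (u h * u (h+1))) ([:w h, - v h, 1:] * [:w (h+1), - v (h+1), 1:])
                 = smult ((d (h+1))\<^sup>2) ([:e (h+1), 1:]\<^sup>2)
                   + smult (d (h+1)) [:e (h+1), 1:] * A - R"
  shows "(d (h-1) * d h + u0) * (d h * d (h+1) + u0)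
           = - u0 * d h * ((e h)\<^sup>2 + v0 * e h + w0)"
proof -
  have degree_R: "degree R \<le> 2"
    using R_def degree_smult_le[of u0 "[:w0, - v0, 1:]"] by simp
  have quartic: "smult (- (u (h - 1) * u h)) ([:w (h - 1), - v (h - 1), 1:] * [:w h, - v h, 1:])
      = smult ((d h)\<^sup>2) ([:e h, 1:]\<^sup>2) + smult (d h) [:e h, 1:] * [:g, f, 0, 1:] - R"
    using ii[of "h - 1"] A_def by simp
  have split_prev: "[:g, f, 0, 1:] + smult (d (h - 1)) [:e (h - 1), 1:] + smult (d h) [:e h, 1:]
      = [:v (h - 1), 1:] * [:w (h - 1), - v (h - 1), 1:]"
    using i[of "h - 1"] A_def by simp
  have "- (u (h - 1) * u h) \<noteq> 0" using u_nz by simp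
  from quartic_quotient_identity[OF degree_R quartic this split_prev i[of h, unfolded A_def]]
  have "(d (h - 1) * d h + coeff R 2) * (d h * d (h + 1) + coeff R 2) = - d h * poly R (- e h)" .
  moreover have "coeff R 2 = u0" using R_def by (simp add: numeral_eq_Suc)
  moreover have "poly R (- e h) = u0 * ((e h)\<^sup>2 + v0 * e h + w0)"
    using R_def by (simp add: power2_eq_square algebra_simps)
  ultimately show ?thesis by simp
qed

end
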